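(* With the notation of the context, let $\bm c\in\mathbb{R}^e$ and let $\bm p=(\rho,\sigma,t_\rho,t_\sigma)$ be a profile. There exists a sequence compatible with $\bm p$ that satisfies the equality constraints for $\bm c$ if and only if there are vectors $\bm a,\bm d_c,\bm d_\infty\in\mathbb{R}^d$ with $\bm d_c\neq\bm 0$ such that, for all $i\in\{1,\dots,n\}$ and $j\in\{1,\dots,m\}$: (1) $\bm r_i^\top\bm a=\rho(i)$ and $\bm r_i^\top\bm d_\infty=0$ whenever $t_\rho(i)\in\{-1,1\}$; $\bm s_i^\top\bm a=\sigma(i)$ and $\bm s_i^\top\bm d_\infty=0$ whenever $t_\sigma(i)\in\{-1,1\}$; (2) $\bm r_i^\top\bm a=\rho(i)$, $\bm r_i^\top\bm d_c=0$, $\bm r_i^\top\bm d_\infty=0$ whenever $t_\rho(i)=0$; $\bm s_i^\top\bm a=\sigma(i)$, $\bm s_i^\top\bm d_c=0$, $\bm s_i^\top\bm d_\infty=0$ whenever $t_\sigma(i)=0$; (3) $\bm r_i^\top\bm d_c>0$ (resp. $<0$) whenever $t_\rho(i)=1$ (resp. $-1$); $\bm s_i^\top\bm d_c>0$ (resp. $<0$) whenever $t_\sigma(i)=1$ (resp. $-1$); (4) $\bm r_i^\top\bm d_\infty>0$ (resp. $<0$) whenever $t_\rho(i)=\omega$ (resp. $-\omega$); $\bm s_i^\top\bm d_\infty>0$ (resp. $<0$) whenever $t_\sigma(i)=\omega$ (resp. $-\omega$); (5) $\bm u_j^\top\bm d_c=\bm u_j^\top\bm d_\infty=0$, $\bm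 v_j^\top\bm d_c=\bm v_j^\top\bm d_\infty=0$, and $(\bm u_j-\bm v_j)^\top\bm a=\bm w_j^\top\bm c+d_j$.
   Context: Fixed data: $\bm r_i,\bm s_i\in\mathbb{Q}^d$, $\bm t_i\in\mathbb{Q}^e$, $h_i\in\mathbb{Q}$ for $i\in[1,n]$ and $\bm u_j,\bm v_j\in\mathbb{Q}^d$, $\bm w_j\in\mathbb{Q}^e$, $d_j\in\mathbb{Q}$ for $j\in[1,m]$. A profile is a tuple $\bm p=(\rho,\sigma,t_\rho,t_\sigma)$ of functions $\rho,\sigma\colon\{1,\dots,n\}\to\mathbb{R}\cup\{-\omega,\omega\}$ and $t_\rho,t_\sigma\colon\{1,\dots,n\}\to\{-\omega,-1,0,1,\omega\}$. For a sequence $(\bm a_k)_{k\ge1}$ in $\mathbb{R}^d$ let $\bm\rho_i=(\bm r_i^\top\bm a_k)_{k\ge1}$ and $\bm\sigma_i=(\bm s_i^\top\bm a_k)_{k\ge1}$. A sequence of pairwise distinct vectors is compatible with $\bm p$ if for every $i$ the following hold for $\bm\rho_i$ w.r.t. $(\rho(i),t_\rho(i))$ and for $\bm\sigma_i$ w.r.t. $(\sigma(i),t_\sigma(i))$: type $0$: constantly equal to the value; type $1$ (resp. $-1$): strictly increasing (resp. strictly decreasing) converging from below (resp. above) to the real value; type $\omega$ (resp. $-\omega$): strictly increasing diverging to $\infty$ (resp. strictly decreasing diverging to $-\infty$), with value $\omega$ (resp. $-\omega$). A sequence $(\bm a_k)$ satisfies the equality constraints for $\bm c$ if $\bm u_j^\top\bm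 a_k=\bm v_j^\top\bm a_\ell+\bm w_j^\top\bm c+d_j$ for all $j$ and all $k<\ell$.
   Formalization: Each profile satisfies $\rho(i)=\omega$ (resp. $-\omega$) whenever $t_\rho(i)=\omega$ (resp. $-\omega$) and $\rho(i)\in\mathbb{R}$ whenever $t_\rho(i)\in\{-1,0,1\}$, likewise for $\sigma$ and $t_\sigma$. Apart from conventions, each condition added here is assumed in the paper as well or is needed for the statement above to hold. *)

theory Defs
  imports "HOL-Analysis.Analysis" "HOL-Library.Extended_Real"
begin

datatype ptype = NegOmega | NegOne | Zero | One | Omega

definition seq_compat :: "(nat \<Rightarrow> real) \<Rightarrow> ereal \<Rightarrow> ptype \<Rightarrow> bool" where
  "seq_compat x v t =
    (case t of
       Zero \<Rightarrow> (\<forall>k. ereal (x k) = v)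
     | One \<Rightarrow> (\<exists>r. v = ereal r \<and> (\<forall>k l. k < l \<longrightarrow> x k < x l) \<and> x \<longlonglongrightarrow> r)
     | NegOne \<Rightarrow> (\<exists>r. v = ereal r \<and> (\<forall>k l. k < l \<longrightarrow> x l < x k) \<and> x \<longlonglongrightarrow> r)
     | Omega \<Rightarrow> v = PInfty \<and> (\<forall>k l. k < l \<longrightarrow> x k < x l) \<and> filterlim x at_top sequentially
     | NegOmega \<Rightarrow> v = MInfty \<and> (\<forall>k l. k < l \<longrightarrow> x l < x k) \<and> filterlim x at_bot sequentially)"

definition wf_entry :: "ereal \<Rightarrow> ptype \<Rightarrow> bool" where
  "wf_entry v t =
    (case t of
       Omega \<Rightarrow> v = PInfty
     | NegOmega \<Rightarrow> v = MInfty
     | _ \<Rightarrow> (\<exists>r. v = ereal r))"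

text \<open>A sequence (indexed from 0 instead of 1) of pairwise distinct vectors
  compatible with the profile (rho, sig, trho, tsig) for data r_i, s_i, i in 1..n.\<close>
definition compatible ::
  "nat \<Rightarrow> (nat \<Rightarrow> real^'d) \<Rightarrow> (nat \<Rightarrow> real^'d) \<Rightarrow>
   (nat \<Rightarrow> ereal) \<Rightarrow> (nat \<Rightarrow> ereal) \<Rightarrow> (nat \<Rightarrow> ptype) \<Rightarrow> (nat \<Rightarrow> ptype) \<Rightarrow>
   (nat \<Rightarrow> real^'d) \<Rightarrow> bool" where
  "compatible n r s rho sig trho tsig a =
    (inj a \<and>
     (\<forall>i\<in>{1..n}. seq_compat (\<lambda>k. r i \<bullet> a k) (rho i) (trho i)
                \<and> seq_compat (\<lambda>k. s i \<bullet> a k) (sig i) (tsig i)))"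

definition eq_constraints ::
  "nat \<Rightarrow> (nat \<Rightarrow> real^'d) \<Rightarrow> (nat \<Rightarrow> real^'d) \<Rightarrow> (nat \<Rightarrow> real^'e) \<Rightarrow> (nat \<Rightarrow> real) \<Rightarrow>
   real^'e \<Rightarrow> (nat \<Rightarrow> real^'d) \<Rightarrow> bool" where
  "eq_constraints m u v w dd c a =
    (\<forall>j\<in>{1..m}. \<forall>k l. k < l \<longrightarrow> u j \<bullet> a k = v j \<bullet> a l + w j \<bullet> c + dd j)"

definition rat_vec :: "real^'d \<Rightarrow> bool" where
  "rat_vec x = (\<forall>k. x $ k \<in> \<rat>)"

end

theory Submission
  imports Defs
begin

text \<open>
  Given a certificate \<open>(a, d\<^sub>c, d\<^sub>\<infinity>)\<close>, the sequence \<open>a - d\<^sub>c/(k+1) + k M d\<^sub>\<infinity>\<close> works once \<open>M\<close>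
  is large: a row of type \<open>\<plusminus>1\<close> does not see \<open>d\<^sub>\<infinity>\<close> and converges monotonically, a row of type
  \<open>\<plusminus>\<omega>\<close> is dominated by its \<open>d\<^sub>\<infinity>\<close>-term, and every functional vanishing on \<open>d\<^sub>c\<close> and \<open>d\<^sub>\<infinity>\<close>
  is constant along the sequence, which gives the equality constraints.

  Conversely, drop the first term of a compatible sequence, so that all \<open>u\<^sub>j\<close> and \<open>v\<^sub>j\<close> are
  constant along it, and take for \<open>d\<^sub>c\<close> the difference of its first two terms. The differences
  \<open>a\<^sub>k - a\<^sub>0\<close> lie in the subspace \<open>L\<close> cut out by the \<open>u\<^sub>j\<close>, \<open>v\<^sub>j\<close> and the rows of type \<open>0\<close>.
  The limits of the convergent rows along them are attained in \<open>L\<close> because linear images of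
  subspaces are closed, which gives \<open>a\<close>. Up to a null sequence the differences lie in the common
  kernel of the convergent rows, so some element of that kernel is positive on all divergent rows;
  this is \<open>d\<^sub>\<infinity>\<close>.
\<close>

lemma subspace_limit_attained:
  fixes L :: "'a::euclidean_space set" and q :: "'i \<Rightarrow> 'a"
  assumes L: "subspace L" and J: "finite J" and xL: "\<And>k. x k \<in> L"
    and lim: "\<And>i. i \<in> J \<Longrightarrow> (\<lambda>k. q i \<bullet> x k) \<longlonglongrightarrow> \<gamma> i"
  shows "\<exists>z\<in>L. \<forall>i\<in>J. q i \<bullet> z = \<gamma> i"
proof -
  define G where "G y = (\<Sum>i\<in>J. (q i \<bullet> y) *\<^sub>R q i)" for y
  have "linear G"
    unfolding G_def by (auto simp: linear_iff inner_add_right scaleR_add_left sum.distrib scaleR_sum_right)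
  then have "closed (G ` L)"
    using L by (intro closed_subspace linear_subspace_image)
  moreover have "(\<lambda>k. G (x k)) \<longlonglongrightarrow> (\<Sum>i\<in>J. \<gamma> i *\<^sub>R q i)"
    unfolding G_def by (intro tendsto_sum tendsto_scaleR lim tendsto_const)
  ultimately have "(\<Sum>i\<in>J. \<gamma> i *\<^sub>R q i) \<in> G ` L"
    using closed_sequentially[of "G ` L" "\<lambda>k. G (x k)"] xL by blast
  then obtain z where zL: "z \<in> L" and Gz: "G z = (\<Sum>i\<in>J. \<gamma> i *\<^sub>R q i)"
    by auto
  \<comment> \<open>\<open>G z\<close> being the limit of \<open>G (x k)\<close> means \<open>\<Sum> e i *\<^sub>R q i = 0\<close>; testing this against \<open>x k\<close>
    (in the limit) and against \<open>z\<close> gives \<open>\<Sum> e i\<^sup>2 = 0\<close>.\<close>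
  define e where "e i = \<gamma> i - q i \<bullet> z" for i
  have e_orth: "(\<Sum>i\<in>J. e i * (q i \<bullet> y)) = 0" for y
  proof -
    have "(\<Sum>i\<in>J. e i *\<^sub>R q i) = 0"
      using Gz unfolding G_def e_def by (simp add: scaleR_diff_left sum_subtractf)
    then have "(\<Sum>i\<in>J. e i *\<^sub>R q i) \<bullet> y = 0"
      by simp
    then show ?thesis
      by (simp add: inner_sum_left)
  qed
  have "(\<lambda>k. \<Sum>i\<in>J. e i * (q i \<bullet> x k)) \<longlonglongrightarrow> (\<Sum>i\<in>J. e i * \<gamma> i)"
    by (intro tendsto_sum tendsto_mult lim tendsto_const)
  then have "(\<Sum>i\<in>J. e i * \<gamma> i) = 0"
    by (simp add: e_orth LIMSEQ_const_iff)
  then have "(\<Sum>i\<in>J. e i * e i) = 0"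
    using e_orth[of z] unfolding e_def by (simp add: right_diff_distrib sum_subtractf)
  then have "\<forall>i\<in>J. e i = 0"
    using J by (simp add: sum_nonneg_eq_0_iff)
  then show ?thesis
    using zL unfolding e_def by auto
qed

lemma common_kernel_distance_bound:
  fixes L :: "'a::euclidean_space set" and q :: "'i \<Rightarrow> 'a"
  assumes L: "subspace L" and J: "finite J"
  shows "\<exists>C. \<forall>x\<in>L. \<exists>y\<in>L. (\<forall>i\<in>J. q i \<bullet> y = 0) \<and> norm (x - y) \<le> C * norm (\<Sum>i\<in>J. (q i \<bullet> x) *\<^sub>R q i)"
proof -
  define V where "V = {y\<in>L. \<forall>i\<in>J. q i \<bullet> y = 0}"
  define U where "U = {w\<in>L. \<forall>v\<in>V. orthogonal w v}"
  have V: "subspace V"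
    using L unfolding V_def by (auto simp: subspace_def inner_add_right)
  have U: "subspace U"
    using L unfolding U_def by (auto simp: subspace_def orthogonal_def inner_add_left)
  define G where "G y = (\<Sum>i\<in>J. (q i \<bullet> y) *\<^sub>R q i)" for y
  have G: "linear G"
    unfolding G_def by (auto simp: linear_iff inner_add_right scaleR_add_left sum.distrib scaleR_sum_right)
  have "w = 0" if wU: "w \<in> U" and "G w = 0" for w
  proof -
    have "(\<Sum>i\<in>J. (q i \<bullet> w) * (q i \<bullet> w)) = w \<bullet> G w"
      unfolding G_def by (simp add: inner_sum_right inner_commute)
    then have "(\<Sum>i\<in>J. (q i \<bullet> w) * (q i \<bullet> w)) = 0"
      using \<open>G w = 0\<close> by simp
    then have "w \<in> V"
      using wU J unfolding V_def U_def by (simp add: sum_nonneg_eq_0_iff)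
    then show "w = 0"
      using wU unfolding U_def orthogonal_def by auto
  qed
  then obtain \<epsilon> where \<epsilon>: "\<epsilon> > 0" and G_U_below: "\<And>w. w \<in> U \<Longrightarrow> \<epsilon> * norm w \<le> norm (G w)"
    using injective_imp_isometric[OF closed_subspace[OF U] U linear_conv_bounded_linear[THEN iffD1, OF G]]
    by blast
  have "\<exists>y\<in>L. (\<forall>i\<in>J. q i \<bullet> y = 0) \<and> norm (x - y) \<le> (1 / \<epsilon>) * norm (G x)" if xL: "x \<in> L" for x
  proof -
    obtain y w where y: "y \<in> span V" and w: "\<And>v. v \<in> span V \<Longrightarrow> orthogonal w v" and xyw: "x = y + w"
      using orthogonal_subspace_decomp_exists[of V x] by blast
    have yV: "y \<in> V"
      using y span_minimal[OF order_refl V] by blast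
    then have "w \<in> L"
      using subspace_diff[OF L xL, of y] xyw unfolding V_def by simp
    then have "w \<in> U"
      unfolding U_def using w span_superset by blast
    moreover have "G x = G w"
      using xyw yV linear_add[OF G, of y w] unfolding V_def G_def by simp
    ultimately have "norm (x - y) \<le> (1 / \<epsilon>) * norm (G x)"
      using G_U_below \<epsilon> xyw by (simp add: field_simps)
    with yV show ?thesis
      unfolding V_def by blast
  qed
  then show ?thesis
    unfolding G_def by blast
qed

lemma common_kernel_approx:
  fixes L :: "'a::euclidean_space set" and q :: "'i \<Rightarrow> 'a"
  assumes L: "subspace L" and J: "finite J" and xL: "\<And>k. x k \<in> L"
    and lim: "\<And>i. i \<in> J \<Longrightarrow> (\<lambda>k. q i \<bullet> x k) \<longlonglongrightarrow> 0"
  shows "\<exists>y. (\<forall>k. y k \<in> L \<and> (\<forall>i\<in>J. q i \<bullet> y k = 0)) \<and> (\<lambda>k. x k - y k) \<longlonglongrightarrow> 0"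
proof -
  define G where "G y = (\<Sum>i\<in>J. (q i \<bullet> y) *\<^sub>R q i)" for y
  obtain C where "\<forall>x\<in>L. \<exists>y\<in>L. (\<forall>i\<in>J. q i \<bullet> y = 0) \<and> norm (x - y) \<le> C * norm (G x)"
    using common_kernel_distance_bound[OF L J, of q] unfolding G_def by blast
  then have "\<forall>k. \<exists>y. y \<in> L \<and> (\<forall>i\<in>J. q i \<bullet> y = 0) \<and> norm (x k - y) \<le> C * norm (G (x k))"
    using xL by blast
  then obtain y where y: "\<And>k. y k \<in> L \<and> (\<forall>i\<in>J. q i \<bullet> y k = 0)"
    and close: "\<And>k. norm (x k - y k) \<le> C * norm (G (x k))"
    by metis
  have "(\<lambda>k. G (x k)) \<longlonglongrightarrow> (\<Sum>i\<in>J. 0 *\<^sub>R q i)"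
    unfolding G_def by (intro tendsto_sum tendsto_scaleR lim tendsto_const)
  then have "(\<lambda>k. G (x k)) \<longlonglongrightarrow> 0"
    by simp
  from tendsto_mult_left[OF tendsto_norm_zero[OF this], of C]
  have "(\<lambda>k. C * norm (G (x k))) \<longlonglongrightarrow> 0"
    by simp
  moreover have "\<forall>\<^sub>F k in sequentially. norm (x k - y k) \<le> C * norm (G (x k))"
    using close by (simp add: always_eventually)
  ultimately have "(\<lambda>k. x k - y k) \<longlonglongrightarrow> 0"
    by (rule Lim_null_comparison[rotated])
  with y show ?thesis
    by blast
qed

lemma subspace_escape_direction:
  fixes L :: "'a::euclidean_space set" and q p :: "'i \<Rightarrow> 'a"
  assumes L: "subspace L" and J: "finite J" and D: "finite D" and xL: "\<And>k. x k \<in> L"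
    and lim: "\<And>i. i \<in> J \<Longrightarrow> (\<lambda>k. q i \<bullet> x k) \<longlonglongrightarrow> \<gamma> i"
    and div: "\<And>i. i \<in> D \<Longrightarrow> filterlim (\<lambda>k. p i \<bullet> x k) at_top sequentially"
  shows "\<exists>y\<in>L. (\<forall>i\<in>J. q i \<bullet> y = 0) \<and> (\<forall>i\<in>D. p i \<bullet> y > 0)"
proof -
  obtain z where zL: "z \<in> L" and zJ: "\<forall>i\<in>J. q i \<bullet> z = \<gamma> i"
    using subspace_limit_attained[of L J x q \<gamma>] L J xL lim by blast
  have "x k - z \<in> L" for k
    using xL zL L by (simp add: subspace_diff)
  moreover have "(\<lambda>k. q i \<bullet> (x k - z)) \<longlonglongrightarrow> 0" if "i \<in> J" for i
  proof -
    have "(\<lambda>k. q i \<bullet> x k - q i \<bullet> z) \<longlonglongrightarrow> \<gamma> i - \<gamma> i"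
      using zJ that by (intro tendsto_diff lim) auto
    then show ?thesis
      by (simp add: inner_diff_right)
  qed
  ultimately have "\<exists>y. (\<forall>k. y k \<in> L \<and> (\<forall>i\<in>J. q i \<bullet> y k = 0)) \<and> (\<lambda>k. x k - z - y k) \<longlonglongrightarrow> 0"
    by (rule common_kernel_approx[OF L J])
  then obtain y where yL: "\<And>k. y k \<in> L" and yJ: "\<And>i k. i \<in> J \<Longrightarrow> q i \<bullet> y k = 0"
    and small: "(\<lambda>k. x k - z - y k) \<longlonglongrightarrow> 0"
    by blast
  have "filterlim (\<lambda>k. p i \<bullet> y k) at_top sequentially" if "i \<in> D" for i
  proof -
    have "(\<lambda>k. - (p i \<bullet> z) - p i \<bullet> (x k - z - y k)) \<longlonglongrightarrow> - (p i \<bullet> z) - p i \<bullet> 0"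
      by (intro tendsto_diff tendsto_inner tendsto_const small)
    from filterlim_tendsto_add_at_top[OF this div[OF that]]
    show ?thesis
      by (simp add: inner_diff_right)
  qed
  then have "\<forall>i\<in>D. eventually (\<lambda>k. p i \<bullet> y k > 0) sequentially"
    by (simp add: filterlim_at_top_dense)
  then have "eventually (\<lambda>k. \<forall>i\<in>D. p i \<bullet> y k > 0) sequentially"
    by (rule eventually_ball_finite[OF D])
  then obtain N where "\<forall>i\<in>D. p i \<bullet> y N > 0"
    by (auto simp: eventually_sequentially)
  with yL yJ show ?thesis
    by blast
qed

text \<open>
  \<open>row_witness v t \<alpha> \<beta> \<gamma>\<close> says that a row \<open>q\<close> of the profile with value \<open>v\<close> and type \<open>t\<close>
  satisfies conditions (1)--(4) of the theorem, where \<open>\<alpha> = q \<bullet> a\<close>, \<open>\<beta> = q \<bullet> d\<^sub>c\<close> and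
  \<open>\<gamma> = q \<bullet> d\<^sub>\<infinity>\<close>; \<open>ray_seq M \<alpha> \<beta> \<gamma> k\<close> is that row along \<open>a - d\<^sub>c/(k+1) + k M d\<^sub>\<infinity>\<close>.
\<close>

definition row_witness :: "ereal \<Rightarrow> ptype \<Rightarrow> real \<Rightarrow> real \<Rightarrow> real \<Rightarrow> bool" where
  "row_witness v t \<alpha> \<beta> \<gamma> \<longleftrightarrow>
    (case t of
       Zero \<Rightarrow> ereal \<alpha> = v \<and> \<beta> = 0 \<and> \<gamma> = 0
     | One \<Rightarrow> ereal \<alpha> = v \<and> \<beta> > 0 \<and> \<gamma> = 0
     | NegOne \<Rightarrow> ereal \<alpha> = v \<and> \<beta> < 0 \<and> \<gamma> = 0
     | Omega \<Rightarrow> \<gamma> > 0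
     | NegOmega \<Rightarrow> \<gamma> < 0)"

definition ray_seq :: "real \<Rightarrow> real \<Rightarrow> real \<Rightarrow> real \<Rightarrow> nat \<Rightarrow> real" where
  "ray_seq M \<alpha> \<beta> \<gamma> k = \<alpha> - \<beta> / real (Suc k) + real k * M * \<gamma>"

lemma ray_seq_uminus: "ray_seq M (- \<alpha>) (- \<beta>) (- \<gamma>) k = - ray_seq M \<alpha> \<beta> \<gamma> k"
  by (simp add: ray_seq_def)

lemma ray_seq_strict_mono:
  assumes "0 \<le> M * \<gamma>" and "0 < \<beta> \<or> \<bar>\<beta>\<bar> < M * \<gamma>"
  shows "strict_mono (ray_seq M \<alpha> \<beta> \<gamma>)"
proof (rule strict_monoI)
  fix k l :: nat assume kl: "k < l"
  define e where "e = 1 / real (Suc k) - 1 / real (Suc l)"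
  have "1 / real (Suc k) \<le> 1" "0 < 1 / real (Suc l)"
    by simp_all
  moreover have "1 / real (Suc l) < 1 / real (Suc k)"
    using kl by (simp add: frac_less2)
  ultimately have e: "0 < e" "e < 1"
    unfolding e_def by linarith+
  have "1 \<le> real l - real k"
    using kl by simp
  then have "M * \<gamma> \<le> (real l - real k) * (M * \<gamma>)"
    using assms(1) by (simp add: mult_le_cancel_right1)
  moreover have "0 < \<beta> * e \<or> - (M * \<gamma>) < \<beta> * e"
  proof (cases "0 < \<beta>")
    case False
    then have "- \<bar>\<beta>\<bar> \<le> \<beta> * e"
      using e by (simp add: mult_le_cancel_left1 abs_if)
    then show ?thesis
      using assms(2) False by linarith
  qed (use e in simp)
  moreover have "ray_seq M \<alpha> \<beta> \<gamma> l - ray_seq M \<alpha> \<beta> \<gamma> k = \<beta> * e + (real l - real k) * (M * \<gamma>)"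
    unfolding ray_seq_def e_def by (simp add: algebra_simps)
  ultimately show "ray_seq M \<alpha> \<beta> \<gamma> k < ray_seq M \<alpha> \<beta> \<gamma> l"
    using assms(1) by (smt (verit) mult_nonneg_nonneg)
qed

lemma ray_seq_bounded_part_tendsto: "(\<lambda>k. \<alpha> - \<beta> / real (Suc k)) \<longlonglongrightarrow> \<alpha>"
proof -
  have "(\<lambda>k. \<alpha> - \<beta> * inverse (real (Suc k))) \<longlonglongrightarrow> \<alpha> - \<beta> * 0"
    by (intro tendsto_intros LIMSEQ_inverse_real_of_nat)
  then show ?thesis
    by (simp add: divide_inverse)
qed

lemma ray_seq_tendsto: "ray_seq M \<alpha> \<beta> 0 \<longlonglongrightarrow> \<alpha>"
  using ray_seq_bounded_part_tendsto by (simp add: ray_seq_def[abs_def])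

lemma ray_seq_at_top:
  assumes "0 < M * \<gamma>"
  shows "filterlim (ray_seq M \<alpha> \<beta> \<gamma>) at_top sequentially"
proof -
  have "filterlim (\<lambda>k. (M * \<gamma>) * real k) at_top sequentially"
    using assms by (intro filterlim_tendsto_pos_mult_at_top[OF tendsto_const] filterlim_real_sequentially)
  from filterlim_tendsto_add_at_top[OF ray_seq_bounded_part_tendsto this]
  show ?thesis
    by (simp add: ray_seq_def[abs_def] algebra_simps)
qed

lemma seq_compat_ray_seq:
  assumes wf: "wf_entry v t" and wit: "row_witness v t \<alpha> \<beta> \<gamma>"
    and bound: "\<gamma> \<noteq> 0 \<Longrightarrow> \<bar>\<beta>\<bar> < M * \<bar>\<gamma>\<bar>"
  shows "seq_compat (ray_seq M \<alpha> \<beta> \<gamma>) v t"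
proof (cases t)
  case Zero
  then show ?thesis
    using wit by (simp add: seq_compat_def row_witness_def ray_seq_def)
next
  case One
  then have "strict_mono (ray_seq M \<alpha> \<beta> \<gamma>)"
    using wit by (intro ray_seq_strict_mono) (auto simp: row_witness_def)
  then show ?thesis
    using One wit ray_seq_tendsto by (auto simp: seq_compat_def row_witness_def strict_mono_def)
next
  case NegOne
  then have "strict_mono (ray_seq M (- \<alpha>) (- \<beta>) (- \<gamma>))"
    using wit by (intro ray_seq_strict_mono) (auto simp: row_witness_def)
  then show ?thesis
    using NegOne wit ray_seq_tendsto
    by (auto simp: seq_compat_def row_witness_def strict_mono_def ray_seq_uminus)
next
  case Omega
  then have "0 < \<gamma>" "\<bar>\<beta>\<bar> < M * \<gamma>"
    using wit bound by (auto simp: row_witness_def)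
  then have "strict_mono (ray_seq M \<alpha> \<beta> \<gamma>)" "filterlim (ray_seq M \<alpha> \<beta> \<gamma>) at_top sequentially"
    by (auto intro: ray_seq_strict_mono ray_seq_at_top)
  then show ?thesis
    using Omega wf by (simp add: seq_compat_def wf_entry_def strict_mono_def)
next
  case NegOmega
  then have "0 < - \<gamma>" "\<bar>- \<beta>\<bar> < M * - \<gamma>"
    using wit bound by (auto simp: row_witness_def)
  then have "strict_mono (ray_seq M (- \<alpha>) (- \<beta>) (- \<gamma>))"
    "filterlim (ray_seq M (- \<alpha>) (- \<beta>) (- \<gamma>)) at_top sequentially"
    by (auto intro: ray_seq_strict_mono ray_seq_at_top)
  then show ?thesis
    using NegOmega wf
    by (simp add: seq_compat_def wf_entry_def strict_mono_def ray_seq_uminus[abs_def] filterlim_uminus_at_bot)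
qed

lemma ray_seq_inj:
  assumes "0 < \<beta>" and "0 \<le> M" and "\<gamma> < 0 \<Longrightarrow> \<bar>\<beta>\<bar> < M * \<bar>\<gamma>\<bar>"
  shows "inj (ray_seq M \<alpha> \<beta> \<gamma>)"
proof (cases "0 \<le> \<gamma>")
  case True
  then show ?thesis
    using assms by (intro strict_mono_imp_inj_on ray_seq_strict_mono) auto
next
  case False
  then have "strict_mono (ray_seq M (- \<alpha>) (- \<beta>) (- \<gamma>))"
    using assms by (intro ray_seq_strict_mono) auto
  then have "inj (\<lambda>k. - ray_seq M \<alpha> \<beta> \<gamma> k)"
    unfolding ray_seq_uminus by (rule strict_mono_imp_inj_on)
  then show ?thesis
    by (simp add: inj_def)
qed

lemma finite_ratio_bound:
  fixes \<beta> \<gamma> :: "'i \<Rightarrow> real"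
  assumes "finite I"
  obtains M where "0 \<le> M" and "\<And>i. i \<in> I \<Longrightarrow> \<gamma> i \<noteq> 0 \<Longrightarrow> \<bar>\<beta> i\<bar> < M * \<bar>\<gamma> i\<bar>"
proof
  define M where "M = 1 + (\<Sum>i\<in>I. \<bar>\<beta> i\<bar> / \<bar>\<gamma> i\<bar>)"
  show "0 \<le> M"
    unfolding M_def by (simp add: sum_nonneg)
  fix i assume "i \<in> I" "\<gamma> i \<noteq> 0"
  then have "\<bar>\<beta> i\<bar> / \<bar>\<gamma> i\<bar> < M"
    using assms unfolding M_def by (smt (verit) member_le_sum divide_nonneg_nonneg abs_ge_zero)
  then show "\<bar>\<beta> i\<bar> < M * \<bar>\<gamma> i\<bar>"
    using \<open>\<gamma> i \<noteq> 0\<close> by (simp add: divide_less_eq)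
qed

lemma row_witnesses_imp_sequence:
  fixes q :: "'i \<Rightarrow> 'a::euclidean_space" and a dc dinf :: 'a
  assumes I: "finite I" and dc: "dc \<noteq> 0"
    and wf: "\<And>i. i \<in> I \<Longrightarrow> wf_entry (val i) (ty i)"
    and wit: "\<And>i. i \<in> I \<Longrightarrow> row_witness (val i) (ty i) (q i \<bullet> a) (q i \<bullet> dc) (q i \<bullet> dinf)"
  shows "\<exists>b. inj b \<and> (\<forall>i\<in>I. seq_compat (\<lambda>k. q i \<bullet> b k) (val i) (ty i)) \<and>
             (\<forall>f k. f \<bullet> dc = 0 \<longrightarrow> f \<bullet> dinf = 0 \<longrightarrow> f \<bullet> b k = f \<bullet> a)"
proof -
  \<comment> \<open>\<open>dc\<close> itself is one of the controlled functionals: it makes \<open>dc \<bullet> b k\<close>, hence \<open>b\<close>, injective.\<close>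
  obtain M where M: "0 \<le> M"
    and bound: "\<And>f. f \<in> insert dc (q ` I) \<Longrightarrow> f \<bullet> dinf \<noteq> 0 \<Longrightarrow> \<bar>f \<bullet> dc\<bar> < M * \<bar>f \<bullet> dinf\<bar>"
    using finite_ratio_bound[of "insert dc (q ` I)" "\<lambda>f. f \<bullet> dinf" "\<lambda>f. f \<bullet> dc"] I by blast
  define b where "b k = a - (1 / real (Suc k)) *\<^sub>R dc + (real k * M) *\<^sub>R dinf" for k
  have b_inner: "(\<lambda>k. f \<bullet> b k) = ray_seq M (f \<bullet> a) (f \<bullet> dc) (f \<bullet> dinf)" for f
    by (simp add: fun_eq_iff b_def ray_seq_def inner_diff_right inner_add_right)
  have "inj (\<lambda>k. dc \<bullet> b k)"
    unfolding b_inner using dc M bound[of dc] by (intro ray_seq_inj) auto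
  then have "inj b"
    by (auto simp: inj_def)
  moreover have "seq_compat (\<lambda>k. q i \<bullet> b k) (val i) (ty i)" if "i \<in> I" for i
    unfolding b_inner using that wf wit bound by (intro seq_compat_ray_seq) auto
  moreover have "f \<bullet> b k = f \<bullet> a" if "f \<bullet> dc = 0" "f \<bullet> dinf = 0" for f k
    using that by (simp add: b_def inner_diff_right inner_add_right)
  ultimately show ?thesis
    by blast
qed

lemma seq_compat_imp_row_witness:
  assumes "seq_compat x v t"
    and "t = Zero \<Longrightarrow> \<zeta> = 0 \<and> \<eta> = 0"
    and "t = One \<or> t = NegOne \<Longrightarrow> ereal (x 0 + \<zeta>) = v \<and> \<eta> = 0"
    and "t = Omega \<Longrightarrow> \<eta> > 0" and "t = NegOmega \<Longrightarrow> \<eta> < 0"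
  shows "row_witness v t (x 0 + \<zeta>) (x 1 - x 0) \<eta>"
proof (cases t)
  case Zero
  then have "ereal (x 0) = v" "ereal (x 1) = v"
    using assms(1) by (simp_all add: seq_compat_def)
  then have "ereal (x 0) = v" "x 1 = x 0"
    by (metis ereal.inject)+
  then show ?thesis
    using Zero assms(2) by (simp add: row_witness_def)
next
  case One
  then have "x 0 < x 1"
    using assms(1) by (auto simp: seq_compat_def)
  then show ?thesis
    using One assms(3) by (simp add: row_witness_def)
next
  case NegOne
  then have "x 1 < x 0"
    using assms(1) by (auto simp: seq_compat_def)
  then show ?thesis
    using NegOne assms(3) by (simp add: row_witness_def)
qed (use assms(4,5) in \<open>simp_all add: row_witness_def\<close>)

lemma sequence_imp_row_witnesses:
  fixes b :: "nat \<Rightarrow> 'a::euclidean_space" and q :: "'i \<Rightarrow> 'a"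
  assumes I: "finite I" and inj: "inj b"
    and rows: "\<And>i. i \<in> I \<Longrightarrow> seq_compat (\<lambda>k. q i \<bullet> b k) (val i) (ty i)"
    and const: "\<And>f k. f \<in> F \<Longrightarrow> f \<bullet> b k = f \<bullet> b 0"
  shows "\<exists>a dc dinf. dc \<noteq> 0 \<and>
           (\<forall>i\<in>I. row_witness (val i) (ty i) (q i \<bullet> a) (q i \<bullet> dc) (q i \<bullet> dinf)) \<and>
           (\<forall>f\<in>F. f \<bullet> dc = 0 \<and> f \<bullet> dinf = 0 \<and> f \<bullet> a = f \<bullet> b 0)"
proof -
  define Z where "Z = {i\<in>I. ty i = Zero}"
  define J where "J = {i\<in>I. ty i = One \<or> ty i = NegOne}"
  define D where "D = {i\<in>I. ty i = Omega \<or> ty i = NegOmega}"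
  have J: "finite J" and D: "finite D"
    using I unfolding J_def D_def by auto
  define L where "L = {x. (\<forall>f\<in>F. f \<bullet> x = 0) \<and> (\<forall>i\<in>Z. q i \<bullet> x = 0)}"
  have L: "subspace L"
    unfolding L_def subspace_def by (simp add: inner_add_right)
  define x where "x k = b k - b 0" for k
  have Z_x: "q i \<bullet> x k = 0" if "i \<in> Z" for i k
  proof -
    have "ereal (q i \<bullet> b k) = val i" "ereal (q i \<bullet> b 0) = val i"
      using rows[of i] that unfolding Z_def by (simp_all add: seq_compat_def)
    then have "q i \<bullet> b k = q i \<bullet> b 0"
      by (metis ereal.inject)
    then show ?thesis
      by (simp add: x_def inner_diff_right)
  qed
  have xL: "x k \<in> L" for k
    using const[of _ k] Z_x[of _ k] unfolding L_def by (simp add: x_def inner_diff_right)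
  define \<gamma> where "\<gamma> i = real_of_ereal (val i) - q i \<bullet> b 0" for i
  define p where "p i = (if ty i = Omega then q i else - q i)" for i
  have limJ: "(\<lambda>k. q i \<bullet> x k) \<longlonglongrightarrow> \<gamma> i" if iJ: "i \<in> J" for i
  proof -
    obtain l where "val i = ereal l" "(\<lambda>k. q i \<bullet> b k) \<longlonglongrightarrow> l"
      using rows[of i] iJ unfolding J_def by (cases "ty i") (auto simp: seq_compat_def)
    then show ?thesis
      unfolding x_def \<gamma>_def inner_diff_right by (auto intro: tendsto_diff)
  qed
  have divD: "filterlim (\<lambda>k. p i \<bullet> x k) at_top sequentially" if "i \<in> D" for i
  proof -
    have "filterlim (\<lambda>k. p i \<bullet> b k) at_top sequentially"
      using rows[of i] that unfolding D_def seq_compat_def p_def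
      by (auto simp: filterlim_uminus_at_bot)
    from filterlim_tendsto_add_at_top[OF tendsto_const[of "- (p i \<bullet> b 0)"] this]
    show ?thesis
      unfolding x_def inner_diff_right by simp
  qed
  obtain z where zL: "z \<in> L" and zJ: "\<forall>i\<in>J. q i \<bullet> z = \<gamma> i"
    using subspace_limit_attained[of L J x q \<gamma>] L J xL limJ by blast
  obtain y where yL: "y \<in> L" and yJ: "\<forall>i\<in>J. q i \<bullet> y = 0" and yD: "\<forall>i\<in>D. p i \<bullet> y > 0"
    using subspace_escape_direction[of L J D x q \<gamma> p] L J D xL limJ divD by blast
  have "b 1 - b 0 \<noteq> 0"
    using inj by (auto dest: injD)
  moreover have "row_witness (val i) (ty i) (q i \<bullet> (b 0 + z)) (q i \<bullet> (b 1 - b 0)) (q i \<bullet> y)"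
    if iI: "i \<in> I" for i
  proof -
    have "ty i = Zero \<Longrightarrow> q i \<bullet> z = 0 \<and> q i \<bullet> y = 0"
      using iI zL yL unfolding L_def Z_def by simp
    moreover have "ereal (q i \<bullet> b 0 + q i \<bullet> z) = val i \<and> q i \<bullet> y = 0" if t: "ty i = One \<or> ty i = NegOne"
    proof -
      have "i \<in> J"
        using iI t unfolding J_def by simp
      moreover obtain l where "val i = ereal l"
        using rows[OF iI] t by (cases "ty i") (auto simp: seq_compat_def)
      ultimately show ?thesis
        using zJ yJ by (simp add: \<gamma>_def)
    qed
    moreover have "ty i = Omega \<Longrightarrow> q i \<bullet> y > 0" "ty i = NegOmega \<Longrightarrow> q i \<bullet> y < 0"
      using iI yD unfolding D_def p_def by auto
    ultimately have "row_witness (val i) (ty i) (q i \<bullet> b 0 + q i \<bullet> z) (q i \<bullet> b 1 - q i \<bullet> b 0) (q i \<bullet> y)"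
      by (intro seq_compat_imp_row_witness[OF rows[OF iI]])
    then show ?thesis
      by (simp add: inner_add_right inner_diff_right)
  qed
  moreover have "f \<bullet> (b 1 - b 0) = 0 \<and> f \<bullet> y = 0 \<and> f \<bullet> (b 0 + z) = f \<bullet> b 0" if "f \<in> F" for f
    using that const[of f 1] zL yL unfolding L_def by (simp add: inner_add_right inner_diff_right)
  ultimately show ?thesis
    by blast
qed

lemma seq_compat_Suc:
  assumes "seq_compat x v t"
  shows "seq_compat (\<lambda>k. x (Suc k)) v t"
  using assms by (cases t) (auto simp: seq_compat_def LIMSEQ_Suc filterlim_sequentially_Suc)

lemma ball_Plus_iff: "(\<forall>x\<in>A <+> B. P x) \<longleftrightarrow> (\<forall>a\<in>A. P (Inl a)) \<and> (\<forall>b\<in>B. P (Inr b))"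
  by (auto simp: Plus_def)

lemma compatible_iff_rows:
  "compatible n r s rho sig trho tsig a \<longleftrightarrow>
     inj a \<and> (\<forall>x\<in>{1..n} <+> {1..n}.
               seq_compat (\<lambda>k. case_sum r s x \<bullet> a k) (case_sum rho sig x) (case_sum trho tsig x))"
  by (auto simp: compatible_def ball_Plus_iff)

lemma eq_constraints_tail:
  assumes "eq_constraints m u v w dd c a" and "j \<in> {1..m}"
  shows "u j \<bullet> a (Suc k) = u j \<bullet> a (Suc l)" and "v j \<bullet> a (Suc k) = v j \<bullet> a (Suc l)"
    and "(u j - v j) \<bullet> a (Suc k) = w j \<bullet> c + dd j"
proof -
  have eq: "u j \<bullet> a k = v j \<bullet> a l + w j \<bullet> c + dd j" if "k < l" for k l
    using assms that unfolding eq_constraints_def by blast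
  show "u j \<bullet> a (Suc k) = u j \<bullet> a (Suc l)"
    using eq[of "Suc k" "k + l + 2"] eq[of "Suc l" "k + l + 2"] by simp
  show v_tail: "v j \<bullet> a (Suc k) = v j \<bullet> a (Suc l)" for k l
    using eq[of 0 "Suc k"] eq[of 0 "Suc l"] by simp
  show "(u j - v j) \<bullet> a (Suc k) = w j \<bullet> c + dd j"
    using eq[of "Suc k" "Suc (Suc k)"] v_tail[of "Suc k" k] by (simp add: inner_diff_left)
qed

lemma compatible_imp_certificate:
  assumes "compatible n r s rho sig trho tsig a" and "eq_constraints m u v w dd c a"
  shows "\<exists>a' dc dinf. dc \<noteq> 0 \<and>
    (\<forall>i\<in>{1..n}. row_witness (rho i) (trho i) (r i \<bullet> a') (r i \<bullet> dc) (r i \<bullet> dinf) \<and>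
                row_witness (sig i) (tsig i) (s i \<bullet> a') (s i \<bullet> dc) (s i \<bullet> dinf)) \<and>
    (\<forall>j\<in>{1..m}. u j \<bullet> dc = 0 \<and> u j \<bullet> dinf = 0 \<and> v j \<bullet> dc = 0 \<and> v j \<bullet> dinf = 0 \<and>
                (u j - v j) \<bullet> a' = w j \<bullet> c + dd j)"
proof -
  define b where "b k = a (Suc k)" for k
  have inj: "inj b"
    using assms(1) by (auto simp: b_def compatible_def inj_def)
  have rows: "seq_compat (\<lambda>k. case_sum r s x \<bullet> b k) (case_sum rho sig x) (case_sum trho tsig x)"
    if "x \<in> {1..n} <+> {1..n}" for x
  proof -
    have "seq_compat (\<lambda>k. case_sum r s x \<bullet> a k) (case_sum rho sig x) (case_sum trho tsig x)"
      using assms(1) that unfolding compatible_iff_rows by blast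
    then show ?thesis
      unfolding b_def by (rule seq_compat_Suc)
  qed
  have const: "f \<bullet> b k = f \<bullet> b 0" if f: "f \<in> u ` {1..m} \<union> v ` {1..m}" for f k
  proof -
    obtain j where "j \<in> {1..m}" "f = u j \<or> f = v j"
      using f by blast
    then show ?thesis
      using eq_constraints_tail(1,2)[OF assms(2), of j k 0] unfolding b_def by auto
  qed
  obtain a' dc dinf where "dc \<noteq> 0"
    and wit: "\<forall>x\<in>{1..n} <+> {1..n}. row_witness (case_sum rho sig x) (case_sum trho tsig x)
                 (case_sum r s x \<bullet> a') (case_sum r s x \<bullet> dc) (case_sum r s x \<bullet> dinf)"
    and cols: "\<forall>f\<in>u ` {1..m} \<union> v ` {1..m}. f \<bullet> dc = 0 \<and> f \<bullet> dinf = 0 \<and> f \<bullet> a' = f \<bullet> b 0"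
    using sequence_imp_row_witnesses[of "{1..n} <+> {1..n}" b "case_sum r s" "case_sum rho sig" "case_sum trho tsig"
        "u ` {1..m} \<union> v ` {1..m}", OF _ inj rows const]
    by auto
  moreover have "\<forall>i\<in>{1..n}. row_witness (rho i) (trho i) (r i \<bullet> a') (r i \<bullet> dc) (r i \<bullet> dinf) \<and>
                row_witness (sig i) (tsig i) (s i \<bullet> a') (s i \<bullet> dc) (s i \<bullet> dinf)"
    using wit by (simp add: ball_Plus_iff)
  moreover have "u j \<bullet> dc = 0 \<and> u j \<bullet> dinf = 0 \<and> v j \<bullet> dc = 0 \<and> v j \<bullet> dinf = 0 \<and>
                (u j - v j) \<bullet> a' = w j \<bullet> c + dd j" if "j \<in> {1..m}" for j
    using that cols eq_constraints_tail(3)[OF assms(2), of j 0] unfolding b_def by (simp add: inner_diff_left)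
  ultimately show ?thesis
    by blast
qed

lemma certificate_imp_compatible:
  assumes wf: "\<forall>i\<in>{1..n}. wf_entry (rho i) (trho i) \<and> wf_entry (sig i) (tsig i)"
    and "dc \<noteq> 0"
    and rows: "\<forall>i\<in>{1..n}. row_witness (rho i) (trho i) (r i \<bullet> a) (r i \<bullet> dc) (r i \<bullet> dinf) \<and>
                row_witness (sig i) (tsig i) (s i \<bullet> a) (s i \<bullet> dc) (s i \<bullet> dinf)"
    and cols: "\<forall>j\<in>{1..m}. u j \<bullet> dc = 0 \<and> u j \<bullet> dinf = 0 \<and> v j \<bullet> dc = 0 \<and> v j \<bullet> dinf = 0 \<and>
                (u j - v j) \<bullet> a = w j \<bullet> c + dd j"
  shows "\<exists>b. compatible n r s rho sig trho tsig b \<and> eq_constraints m u v w dd c b"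
proof -
  have wf': "wf_entry (case_sum rho sig x) (case_sum trho tsig x)"
    and rows': "row_witness (case_sum rho sig x) (case_sum trho tsig x)
                  (case_sum r s x \<bullet> a) (case_sum r s x \<bullet> dc) (case_sum r s x \<bullet> dinf)"
    if "x \<in> {1..n} <+> {1..n}" for x
    using that wf rows by (auto simp: Plus_def)
  obtain b where "inj b"
    and "\<forall>x\<in>{1..n} <+> {1..n}. seq_compat (\<lambda>k. case_sum r s x \<bullet> b k) (case_sum rho sig x) (case_sum trho tsig x)"
    and const: "\<forall>f k. f \<bullet> dc = 0 \<longrightarrow> f \<bullet> dinf = 0 \<longrightarrow> f \<bullet> b k = f \<bullet> a"
    using row_witnesses_imp_sequence[of "{1..n} <+> {1..n}" dc "case_sum rho sig" "case_sum trho tsig"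
        "case_sum r s" a dinf, OF _ \<open>dc \<noteq> 0\<close> wf' rows']
    by auto
  then have "compatible n r s rho sig trho tsig b"
    unfolding compatible_iff_rows by blast
  moreover have "eq_constraints m u v w dd c b"
    unfolding eq_constraints_def
  proof (intro ballI allI impI)
    fix j k l assume "j \<in> {1..m}"
    then have "u j \<bullet> b k = u j \<bullet> a" "v j \<bullet> b l = v j \<bullet> a" "(u j - v j) \<bullet> a = w j \<bullet> c + dd j"
      using cols const by auto
    then show "u j \<bullet> b k = v j \<bullet> b l + w j \<bullet> c + dd j"
      by (simp add: inner_diff_left)
  qed
  ultimately show ?thesis
    by blast
qed

lemma row_witness_pair_iff:
  "row_witness rv rt (r \<bullet> a) (r \<bullet> dc) (r \<bullet> dinf) \<and> row_witness sv st (s \<bullet> a) (s \<bullet> dc) (s \<bullet> dinf) \<longleftrightarrow>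
     ((rt = One \<or> rt = NegOne) \<longrightarrow> ereal (r \<bullet> a) = rv \<and> r \<bullet> dinf = 0) \<and>
     ((st = One \<or> st = NegOne) \<longrightarrow> ereal (s \<bullet> a) = sv \<and> s \<bullet> dinf = 0) \<and>
     (rt = Zero \<longrightarrow> ereal (r \<bullet> a) = rv \<and> r \<bullet> dc = 0 \<and> r \<bullet> dinf = 0) \<and>
     (st = Zero \<longrightarrow> ereal (s \<bullet> a) = sv \<and> s \<bullet> dc = 0 \<and> s \<bullet> dinf = 0) \<and>
     (rt = One \<longrightarrow> r \<bullet> dc > 0) \<and> (rt = NegOne \<longrightarrow> r \<bullet> dc < 0) \<and>
     (st = One \<longrightarrow> s \<bullet> dc > 0) \<and> (st = NegOne \<longrightarrow> s \<bullet> dc < 0) \<and>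
     (rt = Omega \<longrightarrow> r \<bullet> dinf > 0) \<and> (rt = NegOmega \<longrightarrow> r \<bullet> dinf < 0) \<and>
     (st = Omega \<longrightarrow> s \<bullet> dinf > 0) \<and> (st = NegOmega \<longrightarrow> s \<bullet> dinf < 0)"
  by (cases rt; cases st) (auto simp: row_witness_def)

theorem mainTheorem13:
  fixes n m :: nat
    and r s :: "nat \<Rightarrow> real^'d" and t :: "nat \<Rightarrow> real^'e" and h :: "nat \<Rightarrow> real"
    and u v :: "nat \<Rightarrow> real^'d" and w :: "nat \<Rightarrow> real^'e" and dd :: "nat \<Rightarrow> real"
    and c :: "real^'e"
    and rho sig :: "nat \<Rightarrow> ereal" and trho tsig :: "nat \<Rightarrow> ptype"
  assumes "\<forall>i\<in>{1..n}. rat_vec (r i) \<and> rat_vec (s i) \<and> rat_vec (t i) \<and> h i \<in> \<rat>"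
    and "\<forall>j\<in>{1..m}. rat_vec (u j) \<and> rat_vec (v j) \<and> rat_vec (w j) \<and> dd j \<in> \<rat>"
    and "\<forall>i\<in>{1..n}. wf_entry (rho i) (trho i) \<and> wf_entry (sig i) (tsig i)"
  shows "(\<exists>a :: nat \<Rightarrow> real^'d. compatible n r s rho sig trho tsig a
                                \<and> eq_constraints m u v w dd c a)
     \<longleftrightarrow>
     (\<exists>a dc dinf :: real^'d. dc \<noteq> 0 \<and>
        (\<forall>i\<in>{1..n}.
           ((trho i = One \<or> trho i = NegOne) \<longrightarrow> ereal (r i \<bullet> a) = rho i \<and> r i \<bullet> dinf = 0) \<and>
           ((tsig i = One \<or> tsig i = NegOne) \<longrightarrow> ereal (s i \<bullet> a) = sig i \<and> s i \<bullet> dinf = 0) \<and>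
           (trho i = Zero \<longrightarrow> ereal (r i \<bullet> a) = rho i \<and> r i \<bullet> dc = 0 \<and> r i \<bullet> dinf = 0) \<and>
           (tsig i = Zero \<longrightarrow> ereal (s i \<bullet> a) = sig i \<and> s i \<bullet> dc = 0 \<and> s i \<bullet> dinf = 0) \<and>
           (trho i = One \<longrightarrow> r i \<bullet> dc > 0) \<and> (trho i = NegOne \<longrightarrow> r i \<bullet> dc < 0) \<and>
           (tsig i = One \<longrightarrow> s i \<bullet> dc > 0) \<and> (tsig i = NegOne \<longrightarrow> s i \<bullet> dc < 0) \<and>
           (trho i = Omega \<longrightarrow> r i \<bullet> dinf > 0) \<and> (trho i = NegOmega \<longrightarrow> r i \<bullet> dinf < 0) \<and>
           (tsig i = Omega \<longrightarrow> s i \<bullet> dinf > 0) \<and> (tsig i = NegOmega \<longrightarrow> s i \<bullet> dinf < 0)) \<and>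
        (\<forall>j\<in>{1..m}.
           u j \<bullet> dc = 0 \<and> u j \<bullet> dinf = 0 \<and> v j \<bullet> dc = 0 \<and> v j \<bullet> dinf = 0 \<and>
           (u j - v j) \<bullet> a = w j \<bullet> c + dd j))"
  unfolding row_witness_pair_iff[symmetric]
  by (intro iffI; elim exE conjE) (blast intro: compatible_imp_certificate certificate_imp_compatible[OF assms(3)])+

end
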